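(* Let $\alpha_1,\dots,\alpha_5\le0$ be integers, let $r:=-(\alpha_1+\cdots+\alpha_5)$, let $a$ be an integer with $0\le a\le r$ and $b\in\mathbb Z$. Then $J_{11}^a\,q^b\,\tilde P_1^{\alpha_1}\tilde P_2^{\alpha_2}\tilde P_3^{\alpha_3}\tilde P_4^{\alpha_4}\tilde P_5^{\alpha_5}$ has all (Laurent) coefficients non-negative.
   Context: $(x;q)_\infty=\prod_{i\ge0}(1-xq^i)$; $J_{11}:=(q^{11};q^{11})_\infty$; $\tilde P_a:=(q^a;q^{11})_\infty(q^{11-a};q^{11})_\infty$ for $1\le a\le 5$. *)

theory Defs
  imports "HOL-Computational_Algebra.Formal_Laurent_Series"
begin

definition qpoch_inf :: "nat \<Rightarrow> nat \<Rightarrow> real fps" where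
  "qpoch_inf c m = lim (\<lambda>N. \<Prod>i<N. (1 - fps_X ^ (c + m * i)))"

definition J11 :: "real fps" where
  "J11 = qpoch_inf 11 11"

definition Ptilde :: "nat \<Rightarrow> real fps" where
  "Ptilde a = qpoch_inf a 11 * qpoch_inf (11 - a) 11"

end

theory Submission
  imports Defs
begin

text \<open>
  The q-Chu-Vandermonde expansion (xy; Q)_N = sum_n [N, n]_Q y^n (x; Q)_n (y; Q)_(N-n), taken at
  x = q^a, y = q^(11-a), Q = q^11, writes (q^11; q^11)_N / ((q^a; q^11)_N (q^(11-a); q^11)_N) as a
  sum of Gaussian binomials in q^11 times reciprocals of products of factors 1 - q^e with e > 0.
  So its coefficients are non-negative, and letting N tend to infinity, so are those of J_11 / P_a
  and of 1 / P_a. Since a <= r, the product in question is q^b times a product of a quotients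
  J_11 / P_i and r - a reciprocals 1 / P_i.
\<close>

definition qpochhammer :: "'a::comm_ring_1 \<Rightarrow> 'a \<Rightarrow> nat \<Rightarrow> 'a" where
  "qpochhammer x q n = (\<Prod>i<n. 1 - x * q ^ i)"

lemma qpochhammer_0 [simp]: "qpochhammer x q 0 = 1"
  by (simp add: qpochhammer_def)

lemma qpochhammer_Suc: "qpochhammer x q (Suc n) = qpochhammer x q n * (1 - x * q ^ n)"
  by (simp add: qpochhammer_def)

fun qbinomial :: "'a::comm_semiring_1 \<Rightarrow> nat \<Rightarrow> nat \<Rightarrow> 'a" where
  "qbinomial q N 0 = 1"
| "qbinomial q 0 (Suc n) = 0"
| "qbinomial q (Suc N) (Suc n) = qbinomial q N (Suc n) + q ^ (N - n) * qbinomial q N n"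

lemma qbinomial_eq_0: "N < n \<Longrightarrow> qbinomial q N n = 0"
  by (induction q N n rule: qbinomial.induct) auto

lemma sum_qbinomial_Suc:
  "(\<Sum>n\<le>Suc N. qbinomial q (Suc N) n * f n)
     = (\<Sum>n\<le>N. qbinomial q N n * f n) + (\<Sum>n\<le>N. q ^ (N - n) * qbinomial q N n * f (Suc n))"
proof -
  have "(\<Sum>n\<le>Suc N. qbinomial q (Suc N) n * f n)
      = (f 0 + (\<Sum>n\<le>N. qbinomial q N (Suc n) * f (Suc n)))
        + (\<Sum>n\<le>N. q ^ (N - n) * qbinomial q N n * f (Suc n))"
    unfolding sum.atMost_Suc_shift by (simp add: sum.distrib algebra_simps)
  also have "f 0 + (\<Sum>n\<le>N. qbinomial q N (Suc n) * f (Suc n)) = (\<Sum>n\<le>Suc N. qbinomial q N n * f n)"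
    unfolding sum.atMost_Suc_shift by simp
  also have "\<dots> = (\<Sum>n\<le>N. qbinomial q N n * f n)"
    by (simp add: qbinomial_eq_0)
  finally show ?thesis .
qed

lemma qpochhammer_mult_expansion:
  fixes x y q :: "'a::comm_ring_1"
  shows "qpochhammer (x * y) q N
           = (\<Sum>n\<le>N. qbinomial q N n * y ^ n * qpochhammer x q n * qpochhammer y q (N - n))"
proof (induction N)
  case 0
  show ?case by simp
next
  case (Suc N)
  define t where "t n = qbinomial q N n * y ^ n * qpochhammer x q n * qpochhammer y q (N - n)" for n
  have "(\<Sum>n\<le>Suc N. qbinomial q (Suc N) n * y ^ n * qpochhammer x q n * qpochhammer y q (Suc N - n))
      = (\<Sum>n\<le>N. qbinomial q N n * (y ^ n * qpochhammer x q n * qpochhammer y q (Suc N - n)))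
        + (\<Sum>n\<le>N. q ^ (N - n) * qbinomial q N n
                    * (y ^ Suc n * qpochhammer x q (Suc n) * qpochhammer y q (N - n)))"
    using sum_qbinomial_Suc[of q N "\<lambda>n. y ^ n * qpochhammer x q n * qpochhammer y q (Suc N - n)"]
    by (simp add: mult.assoc)
  also have "\<dots> = (\<Sum>n\<le>N. t n * (1 - y * q ^ (N - n)) + t n * (q ^ (N - n) * y * (1 - x * q ^ n)))"
    unfolding sum.distrib
    by (intro arg_cong2[where f = "(+)"] sum.cong)
       (auto simp: t_def qpochhammer_Suc Suc_diff_le algebra_simps)
  also have "\<dots> = (\<Sum>n\<le>N. t n) * (1 - x * y * q ^ N)"
    unfolding sum_distrib_right
  proof (rule sum.cong)
    fix n assume "n \<in> {..N}"
    then have "q ^ (N - n) * q ^ n = q ^ N"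
      by (simp flip: power_add)
    then show "t n * (1 - y * q ^ (N - n)) + t n * (q ^ (N - n) * y * (1 - x * q ^ n))
        = t n * (1 - x * y * q ^ N)"
      by (simp add: algebra_simps)
  qed simp
  also have "\<dots> = qpochhammer (x * y) q (Suc N)"
    by (simp add: Suc.IH t_def qpochhammer_Suc)
  finally show ?case ..
qed

definition fps_nonneg :: "'a::linordered_idom fps \<Rightarrow> bool" where
  "fps_nonneg f \<longleftrightarrow> (\<forall>k. 0 \<le> f $ k)"

lemma fps_nonneg_one: "fps_nonneg 1"
  by (simp add: fps_nonneg_def fps_one_nth)

lemma fps_nonneg_X_power: "fps_nonneg (fps_X ^ k)"
  by (simp add: fps_nonneg_def fps_X_power_nth)

lemma fps_nonneg_add: "fps_nonneg f \<Longrightarrow> fps_nonneg g \<Longrightarrow> fps_nonneg (f + g)"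
  by (simp add: fps_nonneg_def)

lemma fps_nonneg_mult: "fps_nonneg f \<Longrightarrow> fps_nonneg g \<Longrightarrow> fps_nonneg (f * g)"
  unfolding fps_nonneg_def fps_mult_nth by (auto intro!: sum_nonneg)

lemma fps_nonneg_power: "fps_nonneg f \<Longrightarrow> fps_nonneg (f ^ n)"
  by (induction n) (auto intro: fps_nonneg_mult fps_nonneg_one)

lemma fps_nonneg_sum: "(\<And>i. i \<in> A \<Longrightarrow> fps_nonneg (f i)) \<Longrightarrow> fps_nonneg (sum f A)"
  by (induction A rule: infinite_finite_induct) (auto intro: fps_nonneg_add simp: fps_nonneg_def)

lemma fps_nonneg_qbinomial: "fps_nonneg q \<Longrightarrow> fps_nonneg (qbinomial q N n)"
  by (induction q N n rule: qbinomial.induct)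
     (auto intro!: fps_nonneg_add fps_nonneg_mult fps_nonneg_power fps_nonneg_one
       simp: fps_nonneg_def[of 0])

lemma fps_inverse_one_minus_X_power:
  assumes "0 < c"
  shows "inverse (1 - fps_X ^ c :: 'a::field fps) = Abs_fps (\<lambda>n. if c dvd n then 1 else 0)"
proof (rule fps_inverse_unique)
  show "(1 - fps_X ^ c) * Abs_fps (\<lambda>n. if c dvd n then 1 else 0) = (1 :: 'a fps)"
  proof (rule fps_ext)
    fix n
    show "((1 - fps_X ^ c) * Abs_fps (\<lambda>n. if c dvd n then 1 else 0)) $ n = (1 :: 'a fps) $ n"
      using assms by (auto simp: algebra_simps fps_X_power_mult_nth dvd_minus_self dest: dvd_imp_le)
  qed
qed

lemma fps_nonneg_inverse_prod_one_minus_X_power: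
  assumes "\<And>i. i \<in> A \<Longrightarrow> 0 < e i"
  shows "fps_nonneg (inverse (\<Prod>i\<in>A. 1 - fps_X ^ e i :: 'a::linordered_field fps))"
  using assms
proof (induction A rule: infinite_finite_induct)
  case (insert i A)
  have "fps_nonneg (inverse (1 - fps_X ^ e i :: 'a fps))"
    using insert.prems by (simp add: fps_inverse_one_minus_X_power fps_nonneg_def)
  with insert show ?case
    by (simp add: fps_inverse_mult fps_nonneg_mult)
qed (simp_all add: fps_nonneg_one)

lemma fps_prod_nth_0: "(\<Prod>i\<in>A. f i) $ 0 = (\<Prod>i\<in>A. f i $ 0 :: 'a::comm_semiring_1)"
  by (induction A rule: infinite_finite_induct) auto

lemma qpochhammer_fps_X_power:
  "qpochhammer (fps_X ^ c) (fps_X ^ m) n = (\<Prod>i<n. 1 - fps_X ^ (c + m * i) :: 'a::comm_ring_1 fps)"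
  by (simp add: qpochhammer_def power_add power_mult)

lemma fps_nonneg_qpochhammer_ratio:
  assumes "0 < c" "n \<le> N"
  shows "fps_nonneg (qpochhammer (fps_X ^ c) (fps_X ^ m) n
                       * inverse (qpochhammer (fps_X ^ c) (fps_X ^ m) N :: 'a::linordered_field fps))"
proof -
  let ?f = "\<lambda>i. 1 - fps_X ^ (c + m * i) :: 'a fps"
  have split: "prod ?f {..<N} = prod ?f {..<n} * prod ?f {n..<N}"
    using prod.atLeastLessThan_concat[of 0 n N ?f] assms(2) by (simp add: atLeast0LessThan)
  have "prod ?f {..<n} $ 0 = 1"
    using assms(1) by (simp add: fps_prod_nth_0)
  then have "qpochhammer (fps_X ^ c) (fps_X ^ m) n * inverse (qpochhammer (fps_X ^ c) (fps_X ^ m) N)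
      = inverse (prod ?f {n..<N})"
    unfolding qpochhammer_fps_X_power split fps_inverse_mult
    by (simp add: inverse_mult_eq_1 inverse_mult_eq_1' mult.assoc[symmetric])
  also have "fps_nonneg \<dots>"
    using assms(1) by (intro fps_nonneg_inverse_prod_one_minus_X_power) simp
  finally show ?thesis .
qed

lemma fps_nonneg_qpochhammer_quotient:
  assumes "0 < c" "0 < d"
  shows "fps_nonneg (qpochhammer (fps_X ^ (c + d)) (fps_X ^ m) N
           * inverse (qpochhammer (fps_X ^ c) (fps_X ^ m) N * qpochhammer (fps_X ^ d) (fps_X ^ m) N
                        :: 'a::linordered_field fps))"
proof -
  let ?x = "fps_X ^ c :: 'a fps" and ?y = "fps_X ^ d :: 'a fps" and ?q = "fps_X ^ m :: 'a fps"
  have "qpochhammer (fps_X ^ (c + d)) ?q N * inverse (qpochhammer ?x ?q N * qpochhammer ?y ?q N)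
      = (\<Sum>n\<le>N. qbinomial ?q N n * ?y ^ n
                  * (qpochhammer ?x ?q n * inverse (qpochhammer ?x ?q N))
                  * (qpochhammer ?y ?q (N - n) * inverse (qpochhammer ?y ?q N)))"
    unfolding power_add qpochhammer_mult_expansion sum_distrib_right fps_inverse_mult
    by (simp add: algebra_simps)
  also have "fps_nonneg \<dots>"
    using assms
    by (intro fps_nonneg_sum fps_nonneg_mult fps_nonneg_qbinomial fps_nonneg_power
          fps_nonneg_X_power fps_nonneg_qpochhammer_ratio) auto
  finally show ?thesis .
qed

lemma tendsto_mult_fps:
  fixes f g :: "'b \<Rightarrow> 'a::ring fps"
  assumes "(f \<longlongrightarrow> A) F" "(g \<longlongrightarrow> B) F"
  shows "((\<lambda>x. f x * g x) \<longlongrightarrow> A * B) F"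
proof (rule tendsto_fpsI)
  fix n
  have "\<forall>\<^sub>F x in F. \<forall>k\<in>{..n}. f x $ k = A $ k" "\<forall>\<^sub>F x in F. \<forall>k\<in>{..n}. g x $ k = B $ k"
    using assms by (simp_all add: eventually_ball_finite_distrib tendsto_fps_iff)
  then show "\<forall>\<^sub>F x in F. (f x * g x) $ n = (A * B) $ n"
    by eventually_elim (auto simp: fps_mult_nth intro!: sum.cong)
qed

lemma fps_nonneg_LIMSEQ:
  assumes "f \<longlonglongrightarrow> g" "\<And>N. fps_nonneg (f N)"
  shows "fps_nonneg g"
  unfolding fps_nonneg_def
proof
  fix k
  from assms(1) have "\<forall>\<^sub>F N in sequentially. f N $ k = g $ k"
    by (simp add: tendsto_fps_iff)
  then obtain N where "f N $ k = g $ k"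
    by (auto simp: eventually_sequentially)
  with assms(2)[of N] show "0 \<le> g $ k"
    by (metis fps_nonneg_def)
qed

lemma qpochhammer_fps_X_power_nth_stable:
  assumes "0 < m" "k < N"
  shows "qpochhammer (fps_X ^ c) (fps_X ^ m) N $ k
           = qpochhammer (fps_X ^ c) (fps_X ^ m :: 'a::comm_ring_1 fps) (Suc k) $ k"
proof -
  from assms(2) have "Suc k \<le> N" by simp
  then show ?thesis
  proof (induction N rule: dec_induct)
    case (step M)
    have "M \<le> m * M"
      using assms(1) by simp
    with step.hyps have "k < c + m * M"
      by linarith
    then have "qpochhammer (fps_X ^ c) (fps_X ^ m) (Suc M) $ k
        = qpochhammer (fps_X ^ c) (fps_X ^ m :: 'a fps) M $ k"
      by (simp add: qpochhammer_Suc algebra_simps fps_X_power_mult_nth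
          flip: power_mult power_add)
    with step.IH show ?case by simp
  qed simp
qed

lemma qpoch_inf_LIMSEQ:
  assumes "0 < m"
  shows "(\<lambda>N. qpochhammer (fps_X ^ c) (fps_X ^ m) N) \<longlonglongrightarrow> qpoch_inf c m"
proof -
  let ?P = "qpochhammer (fps_X ^ c) (fps_X ^ m) :: nat \<Rightarrow> real fps"
  have lim: "?P \<longlonglongrightarrow> Abs_fps (\<lambda>k. ?P (Suc k) $ k)"
  proof (rule tendsto_fpsI)
    fix k
    show "\<forall>\<^sub>F N in sequentially. ?P N $ k = Abs_fps (\<lambda>k. ?P (Suc k) $ k) $ k"
      using assms by (auto simp: eventually_sequentially intro!: exI[of _ "Suc k"]
          qpochhammer_fps_X_power_nth_stable)
  qed
  then have "qpoch_inf c m = Abs_fps (\<lambda>k. ?P (Suc k) $ k)"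
    unfolding qpoch_inf_def qpochhammer_fps_X_power [symmetric] by (rule limI)
  with lim show ?thesis by simp
qed

lemma qpoch_inf_nth_0:
  assumes "0 < c" "0 < m"
  shows "qpoch_inf c m $ 0 = 1"
proof -
  have "\<forall>\<^sub>F N in sequentially. qpochhammer (fps_X ^ c) (fps_X ^ m) N $ 0 = qpoch_inf c m $ 0"
    using qpoch_inf_LIMSEQ[OF assms(2)] by (simp add: tendsto_fps_iff)
  moreover have "qpochhammer (fps_X ^ c) (fps_X ^ m) N $ 0 = (1 :: real)" for N
    using assms(1) by (simp add: qpochhammer_fps_X_power fps_prod_nth_0)
  ultimately show ?thesis by simp
qed

lemma fps_nonneg_qpoch_inf_quotient:
  assumes "0 < c" "0 < d" "0 < m"
  shows "fps_nonneg (qpoch_inf (c + d) m * inverse (qpoch_inf c m * qpoch_inf d m))"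
proof (rule fps_nonneg_LIMSEQ)
  show "(\<lambda>N. qpochhammer (fps_X ^ (c + d)) (fps_X ^ m) N
              * inverse (qpochhammer (fps_X ^ c) (fps_X ^ m) N * qpochhammer (fps_X ^ d) (fps_X ^ m) N))
          \<longlonglongrightarrow> qpoch_inf (c + d) m * inverse (qpoch_inf c m * qpoch_inf d m)"
    using assms by (intro tendsto_mult_fps tendsto_inverse_fps qpoch_inf_LIMSEQ) (simp_all add: qpoch_inf_nth_0)
qed (intro fps_nonneg_qpochhammer_quotient assms)

lemma fps_nonneg_inverse_qpoch_inf:
  assumes "0 < c" "0 < m"
  shows "fps_nonneg (inverse (qpoch_inf c m))"
proof (rule fps_nonneg_LIMSEQ)
  show "(\<lambda>N. inverse (qpochhammer (fps_X ^ c) (fps_X ^ m) N)) \<longlonglongrightarrow> inverse (qpoch_inf c m)"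
    using assms by (intro tendsto_inverse_fps qpoch_inf_LIMSEQ) (simp_all add: qpoch_inf_nth_0)
  show "fps_nonneg (inverse (qpochhammer (fps_X ^ c) (fps_X ^ m) N :: real fps))" for N
    using fps_nonneg_qpochhammer_ratio[of c 0 N m] assms by simp
qed

lemma Ptilde_nth_0: "0 < a \<Longrightarrow> a < 11 \<Longrightarrow> Ptilde a $ 0 = 1"
  by (simp add: Ptilde_def qpoch_inf_nth_0)

lemma fps_nonneg_J11_div_Ptilde:
  "0 < a \<Longrightarrow> a < 11 \<Longrightarrow> fps_nonneg (J11 * inverse (Ptilde a))"
  using fps_nonneg_qpoch_inf_quotient[of a "11 - a" 11] by (simp add: J11_def Ptilde_def)

lemma fps_nonneg_inverse_Ptilde: "0 < a \<Longrightarrow> a < 11 \<Longrightarrow> fps_nonneg (inverse (Ptilde a))"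
  by (simp add: Ptilde_def fps_inverse_mult fps_nonneg_mult fps_nonneg_inverse_qpoch_inf)

lemma fps_nonneg_power_mult_power:
  assumes "fps_nonneg (J * V)" "fps_nonneg V" "j \<le> k"
  shows "fps_nonneg (J ^ j * V ^ k)"
proof -
  have "J ^ j * V ^ k = (J * V) ^ j * V ^ (k - j)"
    using assms(3) by (simp add: power_mult_distrib mult.assoc flip: power_add)
  then show ?thesis
    using assms by (simp add: fps_nonneg_mult fps_nonneg_power)
qed

lemma fps_nonneg_power_mult_prod_list:
  assumes "\<forall>(V, k) \<in> set vs. fps_nonneg (J * V) \<and> fps_nonneg V"
    and "j \<le> sum_list (map snd vs)"
  shows "fps_nonneg (J ^ j * prod_list (map (\<lambda>(V, k). V ^ k) vs))"
  using assms
proof (induction vs arbitrary: j)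
  case Nil
  then show ?case by (simp add: fps_nonneg_one)
next
  case (Cons Vk vs)
  obtain V k where Vk: "Vk = (V, k)" by fastforce
  define i where "i = min j k"
  have "J ^ j = J ^ i * J ^ (j - i)"
    by (simp add: i_def flip: power_add)
  then have "J ^ j * prod_list (map (\<lambda>(V, k). V ^ k) (Vk # vs))
      = (J ^ i * V ^ k) * (J ^ (j - i) * prod_list (map (\<lambda>(V, k). V ^ k) vs))"
    by (simp add: Vk mult_ac)
  moreover have "fps_nonneg (J ^ i * V ^ k)"
    using Cons.prems(1) by (intro fps_nonneg_power_mult_power) (auto simp: Vk i_def)
  moreover have "fps_nonneg (J ^ (j - i) * prod_list (map (\<lambda>(V, k). V ^ k) vs))"
    using Cons.prems by (intro Cons.IH) (auto simp: Vk i_def)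
  ultimately show ?case
    by (metis fps_nonneg_mult)
qed

lemma fps_to_fls_power_int_nonpos:
  fixes f :: "'a::field fps"
  assumes "\<alpha> \<le> 0" "f $ 0 \<noteq> 0"
  shows "fps_to_fls f powi \<alpha> = fps_to_fls (inverse f ^ nat (- \<alpha>))"
proof -
  have "subdegree f = 0"
    using assms(2) by (simp add: subdegree_eq_0_iff)
  then show ?thesis
    using assms by (cases "\<alpha> = 0") (auto simp: power_int_def fps_to_fls_power fls_inverse_fps_to_fls)
qed

lemma fls_nth_X_intpow_times_fps_to_fls_nonneg:
  "fps_nonneg f \<Longrightarrow> 0 \<le> fls_nth (fls_X_intpow b * fps_to_fls f) n"
  by (simp add: fls_X_intpow_times_conv_shift fps_nonneg_def)

theorem lemma6p2:
  fixes \<alpha>1 \<alpha>2 \<alpha>3 \<alpha>4 \<alpha>5 a b :: int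
  assumes "\<alpha>1 \<le> 0" "\<alpha>2 \<le> 0" "\<alpha>3 \<le> 0" "\<alpha>4 \<le> 0" "\<alpha>5 \<le> 0"
    and "0 \<le> a" and "a \<le> - (\<alpha>1 + \<alpha>2 + \<alpha>3 + \<alpha>4 + \<alpha>5)"
  shows "\<forall>n::int. 0 \<le> fls_nth
     (fps_to_fls J11 powi a * fls_X_intpow b
      * fps_to_fls (Ptilde 1) powi \<alpha>1 * fps_to_fls (Ptilde 2) powi \<alpha>2
      * fps_to_fls (Ptilde 3) powi \<alpha>3 * fps_to_fls (Ptilde 4) powi \<alpha>4
      * fps_to_fls (Ptilde 5) powi \<alpha>5) n" (is "\<forall>n. 0 \<le> fls_nth ?F n")
proof
  fix n :: int
  define vs where "vs = [(inverse (Ptilde 1), nat (- \<alpha>1)), (inverse (Ptilde 2), nat (- \<alpha>2)),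
    (inverse (Ptilde 3), nat (- \<alpha>3)), (inverse (Ptilde 4), nat (- \<alpha>4)), (inverse (Ptilde 5), nat (- \<alpha>5))]"
  have nonneg: "fps_nonneg (J11 ^ nat a * prod_list (map (\<lambda>(V, k). V ^ k) vs))"
    using assms by (intro fps_nonneg_power_mult_prod_list)
      (auto simp: vs_def fps_nonneg_J11_div_Ptilde fps_nonneg_inverse_Ptilde)
  have J11_powi: "fps_to_fls J11 powi a = fps_to_fls (J11 ^ nat a)"
    using assms(6) by (simp add: power_int_def fps_to_fls_power)
  have Ptilde_powi: "fps_to_fls (Ptilde i) powi \<alpha> = fps_to_fls (inverse (Ptilde i) ^ nat (- \<alpha>))"
    if "\<alpha> \<le> 0" "i \<in> {1..5}" for i \<alpha>
    using that by (simp add: fps_to_fls_power_int_nonpos Ptilde_nth_0)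
  have product_eq: "?F = fls_X_intpow b * fps_to_fls (J11 ^ nat a * prod_list (map (\<lambda>(V, k). V ^ k) vs))"
    using assms by (simp add: J11_powi Ptilde_powi vs_def fls_times_fps_to_fls mult_ac)
  show "0 \<le> fls_nth ?F n"
    unfolding product_eq by (rule fls_nth_X_intpow_times_fps_to_fls_nonneg[OF nonneg])
qed

end
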